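(* Let $0<\alpha\le 2\pi/3$ and let $u,v\in V$ with $(u,v)\in N_\alpha$. Then there is a path $u_0,\dots,u_m$ with $u_0=u$, $u_m=v$ and $\{u_i,u_{i+1}\}\in E^-_\alpha$ for all $i=0,\dots,m-1$.
   Context: Let $V$ be a finite set of pairwise distinct points (nodes) in the Euclidean plane, $d$ the Euclidean distance, and $R>0$. Fix a finite increasing sequence of radius levels $0<r_1<r_2<\dots<r_k=R$. For $u\in V$ and $1\le i\le k$ let $S_i(u)=\{v\in V\setminus\{u\}: d(u,v)\le r_i\}$. For $0<\alpha<2\pi$, a closed cone of width $\alpha$ with apex $u$ is a set $\{u+t(\cos\varphi,\sin\varphi): t\ge 0,\ \varphi\in[\theta-\alpha/2,\theta+\alpha/2]\}$ for some $\theta$. A finite set $S\subseteq V\setminus\{u\}$ has an $\alpha$-gap (at $u$) if some closed cone of width $\alpha$ with apex $u$ contains no node of $S$ (in particular $\emptyset$ has an $\alpha$-gap). The algorithm CBTC($\alpha$) assigns to each $u$ the index $i_u$ = the least $i\in\{1,\dots,k\}$ such that $S_i(u)$ has no $\alpha$-gap, or $i_u=k$ if there is no such $i$; set $N_\alpha(u)=S_{i_u}(u)$ and $N_\alpha=\{(u,v): v\in N_\alpha(u)\}$ (a directed relation, not necessarily symmetric). Let $E^-_\alpha=\{\{u,v\}: (u,v)\in N_\alpha\text{ and }(v,u)\in N_\alpha\}$. *)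

theory Defs
  imports "HOL-Analysis.Analysis"
begin

text \<open>Points of the Euclidean plane are modelled as complex numbers; dist is the Euclidean distance.
  Radius levels r_1 < ... < r_k are given by a function r :: nat => real on indices 1..k.\<close>

definition S_level :: "complex set \<Rightarrow> (nat \<Rightarrow> real) \<Rightarrow> nat \<Rightarrow> complex \<Rightarrow> complex set" where
  "S_level V r i u = {v \<in> V - {u}. dist u v \<le> r i}"

definition cone :: "complex \<Rightarrow> real \<Rightarrow> real \<Rightarrow> complex set" where
  "cone u \<alpha> \<theta> = {u + complex_of_real t * cis \<phi> | t \<phi>.
      t \<ge> 0 \<and> \<theta> - \<alpha>/2 \<le> \<phi> \<and> \<phi> \<le> \<theta> + \<alpha>/2}"

definition has_gap :: "complex \<Rightarrow> real \<Rightarrow> complex set \<Rightarrow> bool" where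
  "has_gap u \<alpha> S \<longleftrightarrow> (\<exists>\<theta>. cone u \<alpha> \<theta> \<inter> S = {})"

definition cbtc_index :: "complex set \<Rightarrow> (nat \<Rightarrow> real) \<Rightarrow> nat \<Rightarrow> real \<Rightarrow> complex \<Rightarrow> nat" where
  "cbtc_index V r k \<alpha> u =
     (if \<exists>i\<in>{1..k}. \<not> has_gap u \<alpha> (S_level V r i u)
      then (LEAST i. i \<in> {1..k} \<and> \<not> has_gap u \<alpha> (S_level V r i u))
      else k)"

definition N_cbtc :: "complex set \<Rightarrow> (nat \<Rightarrow> real) \<Rightarrow> nat \<Rightarrow> real \<Rightarrow> complex \<Rightarrow> complex set" where
  "N_cbtc V r k \<alpha> u = S_level V r (cbtc_index V r k \<alpha> u) u"

definition N_rel :: "complex set \<Rightarrow> (nat \<Rightarrow> real) \<Rightarrow> nat \<Rightarrow> real \<Rightarrow> (complex \<times> complex) set" where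
  "N_rel V r k \<alpha> = {(u, v). u \<in> V \<and> v \<in> N_cbtc V r k \<alpha> u}"

definition E_minus :: "complex set \<Rightarrow> (nat \<Rightarrow> real) \<Rightarrow> nat \<Rightarrow> real \<Rightarrow> complex set set" where
  "E_minus V r k \<alpha> = {{u, v} | u v. (u, v) \<in> N_rel V r k \<alpha> \<and> (v, u) \<in> N_rel V r k \<alpha>}"

end

theory Submission imports Defs begin

text \<open>Induction on the length d(u,v) of the link. If v also chose u as a neighbour, the link is
  itself an edge of E-minus. Otherwise v stopped at a radius r_i < d(u,v) <= R, so v has a node in
  every cone of width \<alpha>, in particular a node w in the cone at v pointing towards u. Since
  \<alpha> <= 2\<pi>/3, the angle at v between w and u is at most \<pi>/3, so both d(v,w) and d(u,w) are
  shorter than d(u,v): u and v both link to w by shorter links, and induction applies.\<close>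

lemma cmod_rcis_diff_squared:
  "(cmod (rcis d \<theta> - rcis t \<phi>))\<^sup>2 = d\<^sup>2 + t\<^sup>2 - 2 * d * t * cos (\<phi> - \<theta>)"
proof -
  have "(cmod (rcis d \<theta> - rcis t \<phi>))\<^sup>2
      = (d * cos \<theta> - t * cos \<phi>)\<^sup>2 + (d * sin \<theta> - t * sin \<phi>)\<^sup>2"
    by (simp add: cmod_power2)
  also have "\<dots> = d\<^sup>2 * ((cos \<theta>)\<^sup>2 + (sin \<theta>)\<^sup>2) + t\<^sup>2 * ((cos \<phi>)\<^sup>2 + (sin \<phi>)\<^sup>2)
      - 2 * d * t * (cos \<phi> * cos \<theta> + sin \<phi> * sin \<theta>)"
    by (simp add: power2_diff power_mult_distrib cos_squared_eq algebra_simps)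
  also have "\<dots> = d\<^sup>2 + t\<^sup>2 - 2 * d * t * cos (\<phi> - \<theta>)"
    by (simp only: cos_diff sin_cos_squared_add2 mult_1_right)
  finally show ?thesis .
qed

lemma dist_less_if_in_cone_towards:
  fixes a b w :: complex
  assumes "\<beta> \<le> 2 * pi / 3" and "w \<in> cone b \<beta> (Arg (a - b))"
    and "w \<noteq> b" and "dist b w < dist a b"
  shows "dist a w < dist a b"
proof -
  define d where "d = cmod (a - b)"
  define \<theta> where "\<theta> = Arg (a - b)"
  obtain t \<phi> where w: "w = b + rcis t \<phi>" and "t \<ge> 0"
    and "\<theta> - \<beta> / 2 \<le> \<phi>" "\<phi> \<le> \<theta> + \<beta> / 2"
    using assms(2) unfolding cone_def rcis_def \<theta>_def by blast
  then have "\<bar>\<phi> - \<theta>\<bar> \<le> pi / 3"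
    using assms(1) unfolding abs_le_iff by linarith
  have "t = dist b w"
    using w \<open>t \<ge> 0\<close> by (simp add: dist_norm)
  then have "0 < t" "t < d"
    using assms(3,4) \<open>t \<ge> 0\<close> by (auto simp: d_def dist_norm)
  have "cos (pi / 3) \<le> cos \<bar>\<phi> - \<theta>\<bar>"
    using \<open>\<bar>\<phi> - \<theta>\<bar> \<le> pi / 3\<close> by (intro cos_monotone_0_pi_le) auto
  then have cos_ge: "1 / 2 \<le> cos (\<phi> - \<theta>)"
    by (simp add: cos_60)
  have "a - w = rcis d \<theta> - rcis t \<phi>"
    using rcis_cmod_Arg[of "a - b"] w by (simp add: d_def \<theta>_def algebra_simps)
  then have "(dist a w)\<^sup>2 = d\<^sup>2 + t\<^sup>2 - 2 * d * t * cos (\<phi> - \<theta>)"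
    by (simp add: dist_norm cmod_rcis_diff_squared)
  also have "\<dots> \<le> d\<^sup>2 - t * (d - t)"
    using mult_left_mono[OF cos_ge, of "d * t"] \<open>0 < t\<close> \<open>t < d\<close>
    by (simp add: power2_eq_square algebra_simps)
  also have "\<dots> < d\<^sup>2"
    using \<open>0 < t\<close> \<open>t < d\<close> by simp
  finally show ?thesis
    by (simp add: d_def dist_norm power_less_imp_less_base)
qed

lemma finite_measure_induct [consumes 2, case_names less]:
  fixes f :: "'a \<Rightarrow> 'b::linorder"
  assumes "finite A" and "x \<in> A"
    and step: "\<And>x. x \<in> A \<Longrightarrow> (\<And>y. y \<in> A \<Longrightarrow> f y < f x \<Longrightarrow> P y) \<Longrightarrow> P x"
  shows "P x"
proof -
  define below where "below x = {y \<in> A. f y < f x}" for x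
  have "card (below y) < card (below x)" if "y \<in> A" "f y < f x" for x y
  proof (rule psubset_card_mono)
    show "finite (below x)"
      using \<open>finite A\<close> by (simp add: below_def)
    show "below y \<subset> below x"
      using that by (auto simp: below_def)
  qed
  then show ?thesis
    using \<open>x \<in> A\<close> by (induction x taking: "\<lambda>x. card (below x)" rule: measure_induct_rule)
      (metis step)
qed

lemma path_of_rtranclp:
  assumes "(\<lambda>x y. {x, y} \<in> E)\<^sup>*\<^sup>* a b"
  shows "\<exists>ps. ps \<noteq> [] \<and> hd ps = a \<and> last ps = b \<and>
           (\<forall>i. i + 1 < length ps \<longrightarrow> {ps ! i, ps ! (i + 1)} \<in> E)"
  using assms
proof (induction rule: converse_rtranclp_induct)
  case base
  show ?case
    by (intro exI[of _ "[b]"]) auto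
next
  case (step a c)
  then obtain ps where ps: "ps \<noteq> []" "hd ps = c" "last ps = b"
    "\<forall>i. i + 1 < length ps \<longrightarrow> {ps ! i, ps ! (i + 1)} \<in> E" by blast
  show ?case
  proof (intro exI[of _ "a # ps"] conjI allI impI)
    fix i assume "i + 1 < length (a # ps)"
    then show "{(a # ps) ! i, (a # ps) ! (i + 1)} \<in> E"
      using ps step(1) by (cases i) (auto simp: hd_conv_nth)
  qed (use ps in auto)
qed

lemma symp_edge_rtranclp: "symp (\<lambda>x y. {x, y} \<in> E)\<^sup>*\<^sup>*"
  by (rule symp_rtranclp) (simp add: symp_def insert_commute)

lemma cbtc_index_mem:
  assumes "1 \<le> k"
  shows "cbtc_index V r k \<alpha> u \<in> {1..k}"
proof (cases "\<exists>i\<in>{1..k}. \<not> has_gap u \<alpha> (S_level V r i u)")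
  case True
  then have "\<exists>i. i \<in> {1..k} \<and> \<not> has_gap u \<alpha> (S_level V r i u)"
    by blast
  from LeastI_ex[OF this] True show ?thesis
    unfolding cbtc_index_def by simp
next
  case False
  then show ?thesis
    using assms by (simp add: cbtc_index_def)
qed

lemma no_gap_at_cbtc_index:
  assumes "cbtc_index V r k \<alpha> u \<noteq> k"
  shows "\<not> has_gap u \<alpha> (N_cbtc V r k \<alpha> u)"
proof -
  let ?P = "\<lambda>i. i \<in> {1..k} \<and> \<not> has_gap u \<alpha> (S_level V r i u)"
  have "\<exists>i\<in>{1..k}. \<not> has_gap u \<alpha> (S_level V r i u)"
    using assms unfolding cbtc_index_def by argo
  then have index: "cbtc_index V r k \<alpha> u = Least ?P" and "\<exists>i. ?P i"
    unfolding cbtc_index_def by auto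
  from LeastI_ex[OF this(2)] have "\<not> has_gap u \<alpha> (S_level V r (Least ?P) u)"
    by (rule conjunct2)
  then show ?thesis
    unfolding N_cbtc_def index .
qed

lemma mem_N_rel_iff:
  "(u, v) \<in> N_rel V r k \<alpha> \<longleftrightarrow>
     u \<in> V \<and> v \<in> V \<and> v \<noteq> u \<and> dist u v \<le> r (cbtc_index V r k \<alpha> u)"
  by (auto simp: N_rel_def N_cbtc_def S_level_def)

lemma radius_cbtc_index_le:
  assumes "1 \<le> k" and "\<forall>i j. 1 \<le> i \<longrightarrow> i < j \<longrightarrow> j \<le> k \<longrightarrow> r i < r j"
  shows "r (cbtc_index V r k \<alpha> u) \<le> r k"
proof (cases "cbtc_index V r k \<alpha> u = k")
  case False
  then have "1 \<le> cbtc_index V r k \<alpha> u" "cbtc_index V r k \<alpha> u < k"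
    using cbtc_index_mem[OF assms(1), of V r \<alpha> u] by auto
  then have "r (cbtc_index V r k \<alpha> u) < r k"
    using assms(2) by simp
  then show ?thesis
    by simp
qed simp

lemma N_rel_asym_shortcut:
  assumes "1 \<le> k" and "\<forall>i j. 1 \<le> i \<longrightarrow> i < j \<longrightarrow> j \<le> k \<longrightarrow> r i < r j"
    and "\<alpha> \<le> 2 * pi / 3"
    and ab: "(a, b) \<in> N_rel V r k \<alpha>" and ba: "(b, a) \<notin> N_rel V r k \<alpha>"
  obtains w where "(a, w) \<in> N_rel V r k \<alpha>" "(b, w) \<in> N_rel V r k \<alpha>"
    and "dist a w < dist a b" "dist b w < dist a b"
proof -
  let ?i = "cbtc_index V r k \<alpha>"
  have a_links_b: "a \<in> V" "b \<in> V" "b \<noteq> a" "dist a b \<le> r (?i a)"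
    using ab by (simp_all add: mem_N_rel_iff)
  have b_short: "r (?i b) < dist a b"
    using ba a_links_b by (auto simp: mem_N_rel_iff dist_commute)
  have "?i b \<noteq> k"
    using b_short a_links_b(4) radius_cbtc_index_le[OF assms(1,2), of V \<alpha> a] by auto
  then have "cone b \<alpha> (Arg (a - b)) \<inter> N_cbtc V r k \<alpha> b \<noteq> {}"
    using no_gap_at_cbtc_index unfolding has_gap_def by blast
  then obtain w where w_cone: "w \<in> cone b \<alpha> (Arg (a - b))"
    and w_near: "w \<in> V" "w \<noteq> b" "dist b w \<le> r (?i b)"
    by (auto simp: N_cbtc_def S_level_def)
  have bw: "dist b w < dist a b"
    using w_near(3) b_short by linarith
  have aw: "dist a w < dist a b"
    using dist_less_if_in_cone_towards[OF assms(3) w_cone w_near(2) bw] .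
  have "w \<noteq> a"
    using bw by (auto simp: dist_commute)
  then show ?thesis
    using that aw bw a_links_b w_near by (simp add: mem_N_rel_iff)
qed

lemma N_rel_connected_in_E_minus:
  assumes "finite V" and "1 \<le> k" and "\<forall>i j. 1 \<le> i \<longrightarrow> i < j \<longrightarrow> j \<le> k \<longrightarrow> r i < r j"
    and "\<alpha> \<le> 2 * pi / 3" and "(u, v) \<in> N_rel V r k \<alpha>"
  shows "(\<lambda>x y. {x, y} \<in> E_minus V r k \<alpha>)\<^sup>*\<^sup>* u v"
proof -
  let ?N = "N_rel V r k \<alpha>" and ?R = "\<lambda>x y. {x, y} \<in> E_minus V r k \<alpha>"
  have "finite ?N"
    by (rule finite_subset[of _ "V \<times> V"]) (auto simp: mem_N_rel_iff \<open>finite V\<close>)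
  have "?R\<^sup>*\<^sup>* (fst p) (snd p)" if "p \<in> ?N" for p
    using \<open>finite ?N\<close> that
  proof (induction p rule: finite_measure_induct[where f = "\<lambda>p. dist (fst p) (snd p)"])
    case (less p)
    obtain a b where p: "p = (a, b)"
      by fastforce
    with less.hyps have ab: "(a, b) \<in> ?N"
      by simp
    show ?case
    proof (cases "(b, a) \<in> ?N")
      case True
      then have "{a, b} \<in> E_minus V r k \<alpha>"
        using ab by (auto simp: E_minus_def)
      then show ?thesis
        using p by (simp add: r_into_rtranclp)
    next
      case False
      obtain w where "(a, w) \<in> ?N" "(b, w) \<in> ?N" "dist a w < dist a b" "dist b w < dist a b"
        by (rule N_rel_asym_shortcut[OF assms(2,3,4) ab False])
      then have "?R\<^sup>*\<^sup>* a w" "?R\<^sup>*\<^sup>* b w"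
        using less.IH p by auto
      then have "?R\<^sup>*\<^sup>* a w" "?R\<^sup>*\<^sup>* w b"
        using sympD[OF symp_edge_rtranclp] by auto
      then show ?thesis
        using p by (simp add: rtranclp_trans)
    qed
  qed
  then show ?thesis
    using \<open>(u, v) \<in> ?N\<close> by force
qed

theorem lemma3:
  fixes V :: "complex set" and r :: "nat \<Rightarrow> real" and k :: nat and \<alpha> :: real
    and u v :: complex
  assumes "finite V"
    and "k \<ge> 1"
    and "0 < r 1"
    and "\<forall>i j. 1 \<le> i \<longrightarrow> i < j \<longrightarrow> j \<le> k \<longrightarrow> r i < r j"
    and "0 < \<alpha>" and "\<alpha> \<le> 2 * pi / 3"
    and "u \<in> V" and "v \<in> V"
    and "(u, v) \<in> N_rel V r k \<alpha>"
  shows "\<exists>ps :: complex list. ps \<noteq> [] \<and> hd ps = u \<and> last ps = v \<and>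
           (\<forall>i. i + 1 < length ps \<longrightarrow> {ps ! i, ps ! (i + 1)} \<in> E_minus V r k \<alpha>)"
  using N_rel_connected_in_E_minus[OF assms(1,2,4,6,9)] by (rule path_of_rtranclp)

end
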